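(* For any integer $n \ge 2$, any integer $K \ge 1$, and any $L,\mu,\nu > 0$ with $\kappa := L/\mu \ge 4$, there exist a $4$-dimensional function $F \in \mathcal{F}(L,\mu,0,\nu)$ (with $n$ components) and an initialization point $\mathbf{x}_0$ such that for any permutation-based SGD (i.e. for any choice of permutations $\sigma_1,\dots,\sigma_K$) with any constant step size $\eta > 0$ started at $\mathbf{x}_0^1 = \mathbf{x}_0$, and any nonnegative weights $\alpha_1,\dots,\alpha_{K+1}$ (not all zero), the weighted average iterate $\hat{\mathbf{x}} = \frac{\sum_{k=1}^{K+1}\alpha_k\mathbf{x}_0^k}{\sum_{k=1}^{K+1}\alpha_k}$ satisfies $$F(\hat{\mathbf{x}}) - F^* = \Omega\left(\frac{L\nu^2}{\mu^2n^2K^2}\right).$$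
   Context: Finite-sum problem: $F(\mathbf{x}) = \frac1n\sum_{i=1}^n f_i(\mathbf{x})$ on $\mathbb{R}^d$, $F^* = \inf F$. $\mathcal{F}(L,\mu,\tau,\nu)$: all such $F$ with each $f_i$ $L$-smooth (i.e. $\|\nabla f_i(\mathbf{x})-\nabla f_i(\mathbf{y})\|\le L\|\mathbf{x}-\mathbf{y}\|$) and convex, $F$ $\mu$-strongly convex, and $\|\nabla f_i(\mathbf{x}) - \nabla F(\mathbf{x})\| \le \tau\|\nabla F(\mathbf{x})\| + \nu$ for all $i,\mathbf{x}$. Permutation-based SGD with constant step size $\eta$: at the start of each epoch $k = 1,\dots,K$ a permutation $\sigma_k$ of $[n]$ is chosen by an arbitrary rule (possibly depending on all past information), and $\mathbf{x}_i^k = \mathbf{x}_{i-1}^k - \eta\nabla f_{\sigma_k(i)}(\mathbf{x}_{i-1}^k)$ for $i = 1,\dots,n$, $\mathbf{x}_0^{k+1} = \mathbf{x}_n^k$. $\Omega(g)$ means at least a universal positive constant times $g$ (independent of $n,K,L,\mu,\nu,\eta$, the permutations and the weights). *)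

theory Defs
  imports "HOL-Analysis.Analysis" "HOL-Combinatorics.Permutations"
begin

text \<open>Components are indexed by 0..n-1; the component functions f i live on real^4 in the
  theorem, and g i is their gradient (tied to f i by has_derivative in the class predicate).\<close>

definition fs_obj :: "nat \<Rightarrow> (nat \<Rightarrow> 'a::real_normed_vector \<Rightarrow> real) \<Rightarrow> 'a \<Rightarrow> real" where
  "fs_obj n f x = (1 / real n) * (\<Sum>i<n. f i x)"

definition fs_grad :: "nat \<Rightarrow> (nat \<Rightarrow> 'a::real_normed_vector \<Rightarrow> 'a) \<Rightarrow> 'a \<Rightarrow> 'a" where
  "fs_grad n g x = (1 / real n) *\<^sub>R (\<Sum>i<n. g i x)"

definition strongly_convex :: "real \<Rightarrow> ('a::real_normed_vector \<Rightarrow> real) \<Rightarrow> bool" where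
  "strongly_convex \<mu> F \<longleftrightarrow>
     (\<forall>x y t. 0 \<le> t \<and> t \<le> 1 \<longrightarrow>
        F ((1 - t) *\<^sub>R x + t *\<^sub>R y) \<le> (1 - t) * F x + t * F y - \<mu> / 2 * t * (1 - t) * (norm (x - y))\<^sup>2)"

definition in_class ::
  "nat \<Rightarrow> real \<Rightarrow> real \<Rightarrow> real \<Rightarrow> real \<Rightarrow> (nat \<Rightarrow> 'a::real_inner \<Rightarrow> real) \<Rightarrow> (nat \<Rightarrow> 'a \<Rightarrow> 'a) \<Rightarrow> bool" where
  "in_class n L \<mu> \<tau> \<nu> f g \<longleftrightarrow>
     (\<forall>i<n. \<forall>x. (f i has_derivative (\<lambda>h. g i x \<bullet> h)) (at x)) \<and>
     (\<forall>i<n. \<forall>x y. norm (g i x - g i y) \<le> L * norm (x - y)) \<and>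
     (\<forall>i<n. convex_on UNIV (f i)) \<and>
     strongly_convex \<mu> (fs_obj n f) \<and>
     (\<forall>i<n. \<forall>x. norm (g i x - fs_grad n g x) \<le> \<tau> * norm (fs_grad n g x) + \<nu>)"

fun epoch_iter :: "(nat \<Rightarrow> 'a::real_normed_vector \<Rightarrow> 'a) \<Rightarrow> real \<Rightarrow> (nat \<Rightarrow> nat) \<Rightarrow> 'a \<Rightarrow> nat \<Rightarrow> 'a" where
  "epoch_iter g \<eta> s x 0 = x"
| "epoch_iter g \<eta> s x (Suc i) =
     epoch_iter g \<eta> s x i - \<eta> *\<^sub>R g (s i) (epoch_iter g \<eta> s x i)"

text \<open>Epoch start points: sgd_start ... 1 = x0, and the (k+1)-th start is the
  end of epoch k run with permutation sigma k.\<close>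
fun sgd_start :: "nat \<Rightarrow> (nat \<Rightarrow> 'a::real_normed_vector \<Rightarrow> 'a) \<Rightarrow> real \<Rightarrow> (nat \<Rightarrow> nat \<Rightarrow> nat) \<Rightarrow> 'a \<Rightarrow> nat \<Rightarrow> 'a" where
  "sgd_start n g \<eta> \<sigma> x0 0 = x0"
| "sgd_start n g \<eta> \<sigma> x0 (Suc k) =
     (if k = 0 then x0 else epoch_iter g \<eta> (\<sigma> k) (sgd_start n g \<eta> \<sigma> x0 k) n)"

end

theory Submission
  imports Defs
begin

text \<open>The hard instance is essentially two-dimensional: the remaining coordinates only carry the
  term \<open>\<mu>/2 \<bar>x\<bar>\<^sup>2\<close>. Its components are \<open>f\<^sub>i = F + c\<^sub>i x\<^sub>1\<close> with
  \<open>F x = \<mu>/2 \<bar>x\<bar>\<^sup>2 + (\<lambda> - \<mu>)/2 x\<^sub>1\<^sup>2 + g (\<theta> h(x\<^sub>1) - x\<^sub>2)\<close>, where \<open>\<theta> = \<surd>(L/\<mu>)\<close>,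
  \<open>h\<close> is a Huber function of small width \<open>w\<close>, \<open>g\<close> is a convex ramp whose slope saturates at
  \<open>p = \<mu> v\<close>, and the centred noises satisfy \<open>\<nu>/3 \<le> \<bar>c\<^sub>i\<bar> \<le> \<nu>\<close>.

  An SGD step maps \<open>x\<^sub>2\<close> to \<open>(1 - \<eta>\<mu>) x\<^sub>2 + \<eta> g'\<close> with \<open>0 \<le> g' \<le> p\<close>, and \<open>g' = p\<close> as soon
  as \<open>\<bar>x\<^sub>1\<bar> \<ge> w\<close> and \<open>x\<^sub>2 \<le> v\<close>; so \<open>x\<^sub>2 = v\<close> is an equilibrium that can only leak while \<open>x\<^sub>1\<close>
  is near \<open>0\<close>. Small steps (\<open>\<eta> \<le> 1/(2\<mu>nK)\<close>) cannot move \<open>x\<^sub>2\<close> far within \<open>nK\<close> steps; for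
  medium steps every noise kick throws \<open>x\<^sub>1\<close> out of \<open>[-w, w]\<close> again, so \<open>x\<^sub>2\<close> leaks during
  isolated steps only; large steps (\<open>\<eta>\<lambda> \<ge> 5/2\<close>) make \<open>\<bar>x\<^sub>1\<bar>\<close> grow, so \<open>x\<^sub>2\<close> never leaks.
  Hence \<open>x\<^sub>2 \<ge> v/12\<close> at every epoch start and at every weighted average \<open>x\<close>, and
  \<open>F x - F\<^sup>* \<ge> \<mu>/2 (v/12)\<^sup>2\<close>, which is of order \<open>L \<nu>\<^sup>2 / (\<mu>\<^sup>2 n\<^sup>2 K\<^sup>2)\<close> because \<open>v\<close> is of
  order \<open>\<theta> \<nu> / (\<mu> n K)\<close>.\<close>

section \<open>Smooth one-dimensional pieces\<close>

definition relu_sq :: "real \<Rightarrow> real" where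
  "relu_sq z = (max 0 z)\<^sup>2"

lemma has_real_derivative_relu_sq: "(relu_sq has_real_derivative 2 * max 0 z) (at z)"
proof -
  have "((\<lambda>z. if z \<in> {..0} then 0 else z\<^sup>2) has_derivative
      (if z \<in> {..0} then (\<lambda>h. 0) else (\<lambda>h. 2 * z * h))) (at z within ({..0} \<union> {0<..}))"
    by (rule has_derivative_If_within_closures) (auto intro!: derivative_eq_intros)
  moreover have "(\<lambda>z. if z \<in> {..0} then 0 else z\<^sup>2) = relu_sq"
    by (auto simp: relu_sq_def max_def)
  moreover have "(if z \<in> {..0} then (\<lambda>h. 0) else (\<lambda>h. 2 * z * h)) = (*) (2 * max 0 z)"
    by (auto simp: max_def)
  moreover have "{..0} \<union> {0<..} = (UNIV :: real set)"
    by auto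
  ultimately show ?thesis
    by (simp add: has_field_derivative_def)
qed

lemma has_real_derivative_relu_sq_compose [derivative_intros]:
  "(f has_real_derivative f') (at x) \<Longrightarrow>
    ((\<lambda>x. relu_sq (f x)) has_real_derivative 2 * max 0 (f x) * f') (at x)"
  using DERIV_chain2[OF has_real_derivative_relu_sq] by blast

text \<open>\<open>soft_ramp \<gamma> s\<close> vanishes on \<open>z \<le> 0\<close>, equals \<open>\<gamma> z\<^sup>2 / 2\<close> on \<open>[0, s]\<close> and is
  affine with slope \<open>\<gamma> s\<close> beyond \<open>s\<close>.\<close>

definition soft_ramp :: "real \<Rightarrow> real \<Rightarrow> real \<Rightarrow> real" where
  "soft_ramp \<gamma> s z = \<gamma> / 2 * (relu_sq z - relu_sq (z - s))"

definition soft_ramp_deriv :: "real \<Rightarrow> real \<Rightarrow> real \<Rightarrow> real" where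
  "soft_ramp_deriv \<gamma> s z = \<gamma> * (max 0 z - max 0 (z - s))"

lemma has_real_derivative_soft_ramp:
  "(soft_ramp \<gamma> s has_real_derivative soft_ramp_deriv \<gamma> s z) (at z)"
  unfolding soft_ramp_def soft_ramp_deriv_def
  by (auto intro!: derivative_eq_intros simp: algebra_simps)

lemma has_derivative_soft_ramp_compose [derivative_intros]:
  "(f has_derivative f') (at x within S) \<Longrightarrow>
    ((\<lambda>x. soft_ramp \<gamma> s (f x)) has_derivative (\<lambda>h. f' h * soft_ramp_deriv \<gamma> s (f x))) (at x within S)"
  by (rule DERIV_compose_FDERIV[OF has_real_derivative_soft_ramp])

context
  fixes \<gamma> s :: real
  assumes \<gamma>_nonneg: "0 \<le> \<gamma>" and s_nonneg: "0 \<le> s"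
begin

lemma soft_ramp_deriv_nonneg: "0 \<le> soft_ramp_deriv \<gamma> s z"
  unfolding soft_ramp_deriv_def using \<gamma>_nonneg s_nonneg by (auto simp: max_def)

lemma soft_ramp_deriv_le: "soft_ramp_deriv \<gamma> s z \<le> \<gamma> * s"
  unfolding soft_ramp_deriv_def using \<gamma>_nonneg s_nonneg by (intro mult_left_mono) (auto simp: max_def)

lemma soft_ramp_deriv_saturated: "s \<le> z \<Longrightarrow> soft_ramp_deriv \<gamma> s z = \<gamma> * s"
  unfolding soft_ramp_deriv_def using s_nonneg by (simp add: max_def)

lemma soft_ramp_deriv_mono: "a \<le> b \<Longrightarrow> soft_ramp_deriv \<gamma> s a \<le> soft_ramp_deriv \<gamma> s b"
  unfolding soft_ramp_deriv_def using \<gamma>_nonneg s_nonneg by (intro mult_left_mono) (auto simp: max_def)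

lemma soft_ramp_deriv_lipschitz:
  "\<bar>soft_ramp_deriv \<gamma> s a - soft_ramp_deriv \<gamma> s b\<bar> \<le> \<gamma> * \<bar>a - b\<bar>"
proof -
  have "\<bar>max 0 a - max 0 (a - s) - (max 0 b - max 0 (b - s))\<bar> \<le> \<bar>a - b\<bar>"
    using s_nonneg by (simp add: max_def abs_if)
  then show ?thesis
    unfolding soft_ramp_deriv_def right_diff_distrib[symmetric] abs_mult abs_of_nonneg[OF \<gamma>_nonneg]
    using \<gamma>_nonneg by (rule mult_left_mono)
qed

lemma soft_ramp_zero: "soft_ramp \<gamma> s 0 = 0"
  using s_nonneg by (simp add: soft_ramp_def relu_sq_def)

lemma soft_ramp_nonneg: "0 \<le> soft_ramp \<gamma> s z"
proof -
  have "(max 0 (z - s))\<^sup>2 \<le> (max 0 z)\<^sup>2"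
    using s_nonneg by (intro power_mono) auto
  then show ?thesis
    unfolding soft_ramp_def relu_sq_def using \<gamma>_nonneg by simp
qed

lemma mono_soft_ramp: "mono (soft_ramp \<gamma> s)"
proof (rule monoI)
  show "soft_ramp \<gamma> s a \<le> soft_ramp \<gamma> s b" if "a \<le> b" for a b
    using that has_real_derivative_soft_ramp soft_ramp_deriv_nonneg
    by (blast intro: DERIV_nonneg_imp_nondecreasing)
qed

lemma convex_on_soft_ramp: "convex_on UNIV (soft_ramp \<gamma> s)"
  by (rule convex_on_realI[where f' = "soft_ramp_deriv \<gamma> s"])
    (auto intro: has_real_derivative_soft_ramp soft_ramp_deriv_mono)

end

text \<open>The Huber function of width \<open>w\<close>: \<open>u\<^sup>2 / (2 w)\<close> for \<open>\<bar>u\<bar> \<le> w\<close> and \<open>\<bar>u\<bar> - w / 2\<close> beyond.\<close>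

definition huber :: "real \<Rightarrow> real \<Rightarrow> real" where
  "huber w u = (u\<^sup>2 - relu_sq (u - w) - relu_sq (- u - w)) / (2 * w)"

definition huber_deriv :: "real \<Rightarrow> real \<Rightarrow> real" where
  "huber_deriv w u = (u - max 0 (u - w) + max 0 (- u - w)) / w"

lemma has_real_derivative_huber: "(huber w has_real_derivative huber_deriv w u) (at u)"
proof (cases "w = 0")
  case False
  then show ?thesis
    unfolding huber_def huber_deriv_def by (auto intro!: derivative_eq_intros simp: field_simps)
next
  case True
  then have "huber w = (\<lambda>_. 0)"
    by (simp add: huber_def fun_eq_iff)
  with True show ?thesis
    by (simp add: huber_deriv_def)
qed

lemma has_derivative_huber_compose [derivative_intros]:
  "(f has_derivative f') (at x within S) \<Longrightarrow>
    ((\<lambda>x. huber w (f x)) has_derivative (\<lambda>h. f' h * huber_deriv w (f x))) (at x within S)"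
  by (rule DERIV_compose_FDERIV[OF has_real_derivative_huber])

context
  fixes w :: real
  assumes w_pos: "0 < w"
begin

lemma abs_huber_deriv_le: "\<bar>huber_deriv w u\<bar> \<le> 1"
  unfolding huber_deriv_def using w_pos by (auto simp: max_def divide_simps)

lemma huber_deriv_lipschitz: "\<bar>huber_deriv w a - huber_deriv w b\<bar> \<le> \<bar>a - b\<bar> / w"
proof -
  have "\<bar>a - max 0 (a - w) + max 0 (- a - w) - (b - max 0 (b - w) + max 0 (- b - w))\<bar> \<le> \<bar>a - b\<bar>"
    using w_pos by (simp add: max_def abs_if)
  then show ?thesis
    unfolding huber_deriv_def diff_divide_distrib[symmetric] abs_divide
    using w_pos by (simp add: divide_right_mono)
qed

lemma huber_deriv_mono: "a \<le> b \<Longrightarrow> huber_deriv w a \<le> huber_deriv w b"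
  unfolding huber_deriv_def using w_pos by (intro divide_right_mono) (auto simp: max_def)

lemma huber_lipschitz: "\<bar>huber w a - huber w b\<bar> \<le> \<bar>a - b\<bar>"
  using field_differentiable_bound[of UNIV "huber w" "huber_deriv w" 1 a b]
  by (auto intro: has_real_derivative_huber abs_huber_deriv_le)

lemma huber_eq_abs: "w \<le> \<bar>u\<bar> \<Longrightarrow> huber w u = \<bar>u\<bar> - w / 2"
  unfolding huber_def relu_sq_def using w_pos by (auto simp: max_def field_simps power2_eq_square)

lemma convex_on_huber: "convex_on UNIV (huber w)"
  by (rule convex_on_realI[where f' = "huber_deriv w"])
    (auto intro: has_real_derivative_huber huber_deriv_mono)

end

section \<open>Convexity\<close>

lemma inner_self_convex_combination:
  fixes x y :: "'a::real_inner"
  shows "((1 - t) *\<^sub>R x + t *\<^sub>R y) \<bullet> ((1 - t) *\<^sub>R x + t *\<^sub>R y)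
    = (1 - t) * (x \<bullet> x) + t * (y \<bullet> y) - t * (1 - t) * (norm (x - y))\<^sup>2"
  by (simp add: power2_norm_eq_inner inner_commute algebra_simps)

lemma convex_on_inner_self: "convex_on UNIV (\<lambda>x::'a::real_inner. x \<bullet> x)"
proof (rule convex_onI)
  fix t :: real and x y :: 'a
  assume "0 < t" "t < 1"
  then show "((1 - t) *\<^sub>R x + t *\<^sub>R y) \<bullet> ((1 - t) *\<^sub>R x + t *\<^sub>R y) \<le> (1 - t) * (x \<bullet> x) + t * (y \<bullet> y)"
    unfolding inner_self_convex_combination by simp
qed auto

lemma strongly_convex_quadratic_plus_convex:
  fixes R :: "'a::real_inner \<Rightarrow> real"
  assumes "convex_on UNIV R"
  shows "strongly_convex \<mu> (\<lambda>x. \<mu> / 2 * (x \<bullet> x) + R x)"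
proof -
  have "\<mu> / 2 * (z \<bullet> z) + R z \<le> (1 - t) * (\<mu> / 2 * (x \<bullet> x) + R x) + t * (\<mu> / 2 * (y \<bullet> y) + R y)
      - \<mu> / 2 * t * (1 - t) * (norm (x - y))\<^sup>2"
    if "0 \<le> t" "t \<le> 1" and z: "z = (1 - t) *\<^sub>R x + t *\<^sub>R y" for x y z :: 'a and t :: real
  proof -
    have "R z \<le> (1 - t) * R x + t * R y"
      using convex_onD[OF assms, of t x y] that by simp
    moreover have "\<mu> / 2 * (z \<bullet> z) = (1 - t) * (\<mu> / 2 * (x \<bullet> x)) + t * (\<mu> / 2 * (y \<bullet> y))
        - \<mu> / 2 * t * (1 - t) * (norm (x - y))\<^sup>2"
      unfolding z inner_self_convex_combination by (simp add: field_simps)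
    ultimately show ?thesis
      by (simp add: algebra_simps)
  qed
  then show ?thesis
    unfolding strongly_convex_def by blast
qed

lemma convex_on_compose_linear:
  assumes "linear h" and "convex_on UNIV \<phi>"
  shows "convex_on UNIV (\<lambda>x. \<phi> (h x))"
proof (rule convex_onI)
  fix t :: real and x y
  assume "0 < t" "t < 1"
  then show "\<phi> (h ((1 - t) *\<^sub>R x + t *\<^sub>R y)) \<le> (1 - t) * \<phi> (h x) + t * \<phi> (h y)"
    using convex_onD[OF assms(2), of t "h x" "h y"]
    by (simp add: linear_add[OF assms(1)] linear_scale[OF assms(1)])
qed auto

lemma convex_on_scaled_vec_nth: "convex_on UNIV (\<lambda>x::real^'n. c * x $ i)"
  by (rule convex_onI) (auto simp: algebra_simps)

lemma convex_on_compose_vec_nth: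
  "convex_on UNIV \<phi> \<Longrightarrow> convex_on UNIV (\<lambda>x::real^'n. \<phi> (x $ i))"
  using bounded_linear_vec_nth[THEN bounded_linear.linear] by (rule convex_on_compose_linear)

lemma convex_on_mono_compose:
  fixes \<psi> :: "'a::real_vector \<Rightarrow> real" and \<phi> :: "real \<Rightarrow> real"
  assumes "convex_on UNIV \<psi>" and "convex_on UNIV \<phi>" and "mono \<phi>"
  shows "convex_on UNIV (\<lambda>x. \<phi> (\<psi> x))"
proof (rule convex_onI)
  fix t :: real and x y
  assume t: "0 < t" "t < 1"
  have "\<phi> (\<psi> ((1 - t) *\<^sub>R x + t *\<^sub>R y)) \<le> \<phi> ((1 - t) * \<psi> x + t * \<psi> y)"
    using convex_onD[OF assms(1), of t x y] t by (intro monoD[OF assms(3)]) auto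
  also have "\<dots> \<le> (1 - t) * \<phi> (\<psi> x) + t * \<phi> (\<psi> y)"
    using convex_onD[OF assms(2), of t "\<psi> x" "\<psi> y"] t by simp
  finally show "\<phi> (\<psi> ((1 - t) *\<^sub>R x + t *\<^sub>R y)) \<le> (1 - t) * \<phi> (\<psi> x) + t * \<phi> (\<psi> y)" .
qed auto

section \<open>Invariants of permutation-based SGD\<close>

lemma permutes_lessThan_bound: "\<sigma> permutes {..<N} \<Longrightarrow> j < N \<Longrightarrow> \<sigma> j < N"
  using permutes_in_image by fastforce

lemma epoch_iter_invariant:
  assumes step: "\<And>i x. i < N \<Longrightarrow> P x \<Longrightarrow> P (x - \<eta> *\<^sub>R g i x)"
    and s: "\<forall>j<m. s j < N" and "P x"
  shows "P (epoch_iter g \<eta> s x m)"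
  using s by (induction m) (auto intro: step \<open>P x\<close>)

lemma sgd_start_invariant:
  assumes step: "\<And>i x. i < N \<Longrightarrow> P x \<Longrightarrow> P (x - \<eta> *\<^sub>R g i x)"
    and \<sigma>: "\<forall>k\<in>{1..K}. \<sigma> k permutes {..<N}" and "P x" and "k \<le> K + 1"
  shows "P (sgd_start N g \<eta> \<sigma> x k)"
  using \<open>k \<le> K + 1\<close>
proof (induction k)
  case (Suc k)
  show ?case
  proof (cases "k = 0")
    case False
    then have "\<forall>j<N. \<sigma> k j < N"
      using \<sigma> Suc.prems by (auto intro: permutes_lessThan_bound)
    with False Suc show ?thesis
      by (auto intro: epoch_iter_invariant[of N P \<eta> g, OF step])
  qed (simp add: \<open>P x\<close>)
qed (simp add: \<open>P x\<close>)

lemma epoch_iter_ge_power: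
  fixes V :: "'a::real_normed_vector \<Rightarrow> real"
  assumes step: "\<And>i x. i < N \<Longrightarrow> \<rho> * V x \<le> V (x - \<eta> *\<^sub>R g i x)"
    and "0 \<le> \<rho>" and s: "\<forall>j<m. s j < N"
  shows "\<rho> ^ m * V x \<le> V (epoch_iter g \<eta> s x m)"
  using s
proof (induction m)
  case (Suc m)
  then have "\<rho> ^ Suc m * V x \<le> \<rho> * V (epoch_iter g \<eta> s x m)"
    using \<open>0 \<le> \<rho>\<close> by (simp add: mult_left_mono mult.assoc)
  also have "\<dots> \<le> V (epoch_iter g \<eta> s x (Suc m))"
    using step Suc.prems by simp
  finally show ?case .
qed simp

lemma sgd_start_ge_power:
  fixes V :: "'a::real_normed_vector \<Rightarrow> real"
  assumes step: "\<And>i x. i < N \<Longrightarrow> \<rho> * V x \<le> V (x - \<eta> *\<^sub>R g i x)"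
    and "0 \<le> \<rho>" and \<sigma>: "\<forall>k\<in>{1..K}. \<sigma> k permutes {..<N}" and "k \<le> K + 1"
  shows "\<rho> ^ (N * (k - 1)) * V x \<le> V (sgd_start N g \<eta> \<sigma> x k)"
  using \<open>k \<le> K + 1\<close>
proof (induction k)
  case (Suc k)
  show ?case
  proof (cases "k = 0")
    case False
    then have "\<forall>j<N. \<sigma> k j < N"
      using \<sigma> Suc.prems by (auto intro: permutes_lessThan_bound)
    have "\<rho> ^ (N * (Suc k - 1)) * V x = \<rho> ^ N * (\<rho> ^ (N * (k - 1)) * V x)"
      using False by (cases k) (simp_all add: power_add mult.assoc)
    also have "\<dots> \<le> \<rho> ^ N * V (sgd_start N g \<eta> \<sigma> x k)"
      using Suc \<open>0 \<le> \<rho>\<close> by (simp add: mult_left_mono)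
    also have "\<dots> \<le> V (sgd_start N g \<eta> \<sigma> x (Suc k))"
      using False epoch_iter_ge_power[of N \<rho> V \<eta> g, OF step \<open>0 \<le> \<rho>\<close> \<open>\<forall>j<N. \<sigma> k j < N\<close>] by simp
    finally show ?thesis .
  qed simp
qed simp

lemma weighted_average_component_ge:
  fixes x :: "'k \<Rightarrow> real^'n"
  assumes "finite A" and "\<forall>k\<in>A. 0 \<le> \<alpha> k" and "\<exists>k\<in>A. \<alpha> k \<noteq> 0" and "\<forall>k\<in>A. c \<le> x k $ i"
  shows "c \<le> ((1 / sum \<alpha> A) *\<^sub>R (\<Sum>k\<in>A. \<alpha> k *\<^sub>R x k)) $ i"
proof -
  have "0 < sum \<alpha> A"
    using assms(1-3) by (metis order_le_less sum_pos2)
  moreover have "sum \<alpha> A * c \<le> (\<Sum>k\<in>A. \<alpha> k * x k $ i)"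
    unfolding sum_distrib_right using assms(2,4) by (intro sum_mono mult_left_mono) auto
  ultimately show ?thesis
    by (simp add: field_simps)
qed

section \<open>The hard instance\<close>

lemma has_derivative_vec_nth [derivative_intros]:
  "((\<lambda>x::real^'n. x $ i) has_derivative (\<lambda>h. h $ i)) F"
  using bounded_linear_vec_nth by (rule bounded_linear_imp_has_derivative)

lemma abs_vec_nth_diff_le_norm: "\<bar>a $ i - b $ i\<bar> \<le> norm (a - b :: real^'n)"
  using component_le_norm_cart[of "a - b" i] by simp

lemma sum_neg_one_power: "(\<Sum>j<n. (-1::real) ^ j) = (if even n then 0 else 1)"
  by (induction n) auto

text \<open>In the notation above: \<open>\<lambda> = curv\<close>, \<open>p = cap\<close>, \<open>v = v_eq\<close>, \<open>w = width\<close>,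
  \<open>c\<^sub>i = noise i\<close>, \<open>\<theta> h(x\<^sub>1) - x\<^sub>2 = zfun x\<close>, \<open>g' = push x\<close> and
  \<open>F x - \<mu>/2 \<bar>x\<bar>\<^sup>2 = rest x\<close>.\<close>

locale hard_instance =
  fixes n K :: nat and L \<mu> \<nu> :: real
  assumes n_ge_2: "2 \<le> n" and K_ge_1: "1 \<le> K" and L_pos: "0 < L" and \<mu>_pos: "0 < \<mu>" and \<nu>_pos: "0 < \<nu>"
    and condition_number: "4 \<le> L / \<mu>"
begin

definition \<theta> :: real where "\<theta> = sqrt (L / \<mu>)"
definition curv :: real where "curv = 3 * L / 4"
definition \<gamma> :: real where "\<gamma> = \<mu> / 20"
definition scale :: real where "scale = \<theta> * \<nu> / (\<mu> * n * K)"
definition v_eq :: real where "v_eq = scale / 1000"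
definition cap :: real where "cap = \<mu> * v_eq"
definition z_sat :: real where "z_sat = cap / \<gamma>"
definition width :: real where "width = scale / (20 * \<theta>)"
definition far :: real where "far = 5 * (\<nu> + \<theta> * cap) / curv + width"

definition noise :: "nat \<Rightarrow> real" where
  "noise i = 2 * \<nu> / 3 * ((-1) ^ i - (\<Sum>j<n. (-1) ^ j) / n)"

definition zfun :: "real^4 \<Rightarrow> real" where
  "zfun x = \<theta> * huber width (x $ 1) - x $ 2"

definition push :: "real^4 \<Rightarrow> real" where
  "push x = soft_ramp_deriv \<gamma> z_sat (zfun x)"

definition rest :: "real^4 \<Rightarrow> real" where
  "rest x = (curv - \<mu>) / 2 * (x $ 1)\<^sup>2 + soft_ramp \<gamma> z_sat (zfun x)"

definition grad_rest :: "real^4 \<Rightarrow> real^4" where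
  "grad_rest x = ((curv - \<mu>) * x $ 1 + \<theta> * push x * huber_deriv width (x $ 1)) *\<^sub>R axis 1 1
    - push x *\<^sub>R axis 2 1"

definition comp_fun :: "nat \<Rightarrow> real^4 \<Rightarrow> real" where
  "comp_fun i x = \<mu> / 2 * (x \<bullet> x) + rest x + noise i * x $ 1"

definition comp_grad :: "nat \<Rightarrow> real^4 \<Rightarrow> real^4" where
  "comp_grad i x = \<mu> *\<^sub>R x + grad_rest x + noise i *\<^sub>R axis 1 1"

definition x_init :: "real^4" where
  "x_init = far *\<^sub>R axis 1 1 + v_eq *\<^sub>R axis 2 1"

lemma n_pos: "0 < real n" and K_pos: "0 < real K"
  using n_ge_2 K_ge_1 by auto

lemma \<theta>_pos: "0 < \<theta>"
  unfolding \<theta>_def using condition_number by simp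

lemma \<theta>_sq: "\<theta> * \<theta> = L / \<mu>"
  unfolding \<theta>_def using L_pos \<mu>_pos by simp

lemma \<mu>_le_curv: "\<mu> \<le> curv"
  unfolding curv_def using condition_number \<mu>_pos by (simp add: field_simps)

lemma \<gamma>_pos: "0 < \<gamma>" and curv_pos: "0 < curv"
  unfolding \<gamma>_def curv_def using \<mu>_pos L_pos by auto

lemma scale_pos: "0 < scale"
  unfolding scale_def using \<theta>_pos \<nu>_pos \<mu>_pos n_pos K_pos by simp

lemma v_eq_pos: "0 < v_eq" and cap_pos: "0 < cap" and z_sat_pos: "0 < z_sat" and width_pos: "0 < width"
  unfolding v_eq_def cap_def z_sat_def width_def using scale_pos \<mu>_pos \<gamma>_pos \<theta>_pos by auto

lemma \<gamma>_z_sat: "\<gamma> * z_sat = cap"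
  unfolding z_sat_def using \<gamma>_pos by simp

lemma width_le_far: "width \<le> far"
  unfolding far_def using \<nu>_pos cap_pos \<theta>_pos curv_pos by simp

lemma noise_sum: "(\<Sum>i<n. noise i) = 0"
proof -
  have "(\<Sum>i<n. (-1::real) ^ i - (\<Sum>j<n. (-1) ^ j) / n) = 0"
    using n_pos by (simp add: sum_subtractf)
  then show ?thesis
    unfolding noise_def sum_distrib_left[symmetric] by simp
qed

lemma noise_bounds: "\<nu> / 3 \<le> \<bar>noise i\<bar>" "\<bar>noise i\<bar> \<le> \<nu>"
proof -
  define m where "m = (\<Sum>j<n. (-1::real) ^ j) / n"
  have "\<bar>m\<bar> \<le> 1 / 2"
    unfolding m_def sum_neg_one_power using n_ge_2 by (auto simp: divide_simps)
  moreover have "\<bar>(-1::real) ^ i\<bar> = 1"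
    by simp
  ultimately have "1 / 2 \<le> \<bar>(-1) ^ i - m\<bar>" "\<bar>(-1) ^ i - m\<bar> \<le> 3 / 2"
    using abs_triangle_ineq2[of "(-1::real) ^ i" m] abs_triangle_ineq4[of "(-1::real) ^ i" m] by linarith+
  then show "\<nu> / 3 \<le> \<bar>noise i\<bar>" "\<bar>noise i\<bar> \<le> \<nu>"
    unfolding noise_def m_def[symmetric] using \<nu>_pos by (simp_all add: abs_mult)
qed

lemma push_nonneg: "0 \<le> push x"
  unfolding push_def using \<gamma>_pos z_sat_pos by (simp add: soft_ramp_deriv_nonneg)

lemma push_le_cap: "push x \<le> cap"
  unfolding push_def \<gamma>_z_sat[symmetric] using \<gamma>_pos z_sat_pos by (simp add: soft_ramp_deriv_le)

lemma rest_nonneg: "0 \<le> rest x"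
  unfolding rest_def using \<mu>_le_curv soft_ramp_nonneg[of \<gamma> z_sat] \<gamma>_pos z_sat_pos by simp

lemma convex_on_zfun: "convex_on UNIV zfun"
proof -
  have "convex_on UNIV (\<lambda>x::real^4. \<theta> * huber width (x $ 1))"
    using \<theta>_pos convex_on_compose_vec_nth[OF convex_on_huber[OF width_pos]] by (intro convex_on_cmul) auto
  then have "convex_on UNIV (\<lambda>x::real^4. \<theta> * huber width (x $ 1) + (- 1) * x $ 2)"
    using convex_on_scaled_vec_nth by (rule convex_on_add)
  then show ?thesis
    by (simp add: zfun_def[abs_def])
qed

lemma convex_on_rest: "convex_on UNIV rest"
proof -
  have "convex_on UNIV (soft_ramp \<gamma> z_sat)" and "mono (soft_ramp \<gamma> z_sat)"
    using \<gamma>_pos z_sat_pos by (simp_all add: convex_on_soft_ramp mono_soft_ramp)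
  then have "convex_on UNIV (\<lambda>x. soft_ramp \<gamma> z_sat (zfun x))"
    by (rule convex_on_mono_compose[OF convex_on_zfun])
  then show ?thesis
    unfolding rest_def[abs_def] using \<mu>_le_curv convex_on_compose_vec_nth[OF convex_power2]
    by (intro convex_on_add convex_on_cmul) auto
qed

lemma convex_on_comp_fun: "convex_on UNIV (comp_fun i)"
proof -
  have "convex_on UNIV (\<lambda>x::real^4. \<mu> / 2 * (x \<bullet> x))"
    using \<mu>_pos convex_on_inner_self by (intro convex_on_cmul) auto
  then show ?thesis
    unfolding comp_fun_def[abs_def] using convex_on_rest convex_on_scaled_vec_nth by (intro convex_on_add)
qed

lemma fs_obj_comp_fun: "fs_obj n comp_fun x = \<mu> / 2 * (x \<bullet> x) + rest x"
proof -
  have "(\<Sum>i<n. comp_fun i x) = n * (\<mu> / 2 * (x \<bullet> x) + rest x) + (\<Sum>i<n. noise i) * x $ 1"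
    by (simp add: comp_fun_def sum.distrib sum_distrib_right)
  then show ?thesis
    using n_pos by (simp add: fs_obj_def noise_sum)
qed

lemma fs_grad_comp_grad: "fs_grad n comp_grad x = \<mu> *\<^sub>R x + grad_rest x"
proof -
  have "(\<Sum>i<n. comp_grad i x) = n *\<^sub>R (\<mu> *\<^sub>R x + grad_rest x) + (\<Sum>i<n. noise i) *\<^sub>R axis 1 1"
    by (simp add: comp_grad_def sum.distrib scaleR_sum_left sum_constant_scaleR scaleR_add_right
        del: sum_constant)
  then show ?thesis
    using n_pos by (simp add: fs_grad_def noise_sum)
qed

lemma INF_fs_obj_comp_fun: "(INF x. fs_obj n comp_fun x) = 0"
proof (rule cInf_eq_minimum)
  show "0 \<in> range (fs_obj n comp_fun)"
    using soft_ramp_zero[of \<gamma> z_sat] \<gamma>_pos z_sat_pos width_pos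
    by (auto simp: image_iff fs_obj_comp_fun rest_def zfun_def huber_def relu_sq_def intro!: exI[of _ 0])
  show "0 \<le> y" if "y \<in> range (fs_obj n comp_fun)" for y
    using that rest_nonneg \<mu>_pos by (auto simp: fs_obj_comp_fun)
qed

lemma has_derivative_comp_fun: "(comp_fun i has_derivative (\<lambda>h. comp_grad i x \<bullet> h)) (at x)"
proof -
  have "(comp_fun i has_derivative (\<lambda>h. \<mu> / 2 * (h \<bullet> x + x \<bullet> h) + (curv - \<mu>) / 2 * (2 * x $ 1 * h $ 1)
      + (\<theta> * (h $ 1 * huber_deriv width (x $ 1)) - h $ 2) * push x + noise i * h $ 1)) (at x)"
    unfolding comp_fun_def[abs_def] rest_def zfun_def push_def
    by (auto intro!: derivative_eq_intros simp: power2_eq_square)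
  then show ?thesis
    by (rule has_derivative_eq_rhs)
      (simp add: fun_eq_iff comp_grad_def grad_rest_def inner_axis inner_axis' inner_commute
        algebra_simps; simp add: field_simps)
qed

lemma zfun_lipschitz: "\<bar>zfun a - zfun b\<bar> \<le> (\<theta> + 1) * norm (a - b)"
proof -
  have "zfun a - zfun b = \<theta> * (huber width (a $ 1) - huber width (b $ 1)) - (a $ 2 - b $ 2)"
    by (simp add: zfun_def algebra_simps)
  then have "\<bar>zfun a - zfun b\<bar> \<le> \<theta> * \<bar>huber width (a $ 1) - huber width (b $ 1)\<bar> + \<bar>a $ 2 - b $ 2\<bar>"
    using abs_triangle_ineq4[of "\<theta> * (huber width (a $ 1) - huber width (b $ 1))" "a $ 2 - b $ 2"] \<theta>_pos
    by (simp add: abs_mult)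
  also have "\<dots> \<le> \<theta> * norm (a - b) + norm (a - b)"
    using huber_lipschitz[OF width_pos, of "a $ 1" "b $ 1"] abs_vec_nth_diff_le_norm[of a 1 b]
      abs_vec_nth_diff_le_norm[of a 2 b] \<theta>_pos
    by (intro add_mono mult_left_mono) auto
  finally show ?thesis
    by (simp add: algebra_simps)
qed

lemma push_lipschitz: "\<bar>push a - push b\<bar> \<le> \<gamma> * (\<theta> + 1) * norm (a - b)"
proof -
  have "\<bar>push a - push b\<bar> \<le> \<gamma> * \<bar>zfun a - zfun b\<bar>"
    unfolding push_def using \<gamma>_pos z_sat_pos by (simp add: soft_ramp_deriv_lipschitz)
  also have "\<dots> \<le> \<gamma> * ((\<theta> + 1) * norm (a - b))"
    using zfun_lipschitz \<gamma>_pos by (simp add: mult_left_mono)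
  finally show ?thesis
    by (simp add: mult.assoc)
qed

text \<open>The three terms are the curvature along \<open>e\<^sub>1\<close>, the Lipschitz constant of \<open>push\<close>
  times the length \<open>\<theta> + 1\<close> of \<open>\<theta> e\<^sub>1 - e\<^sub>2\<close>, and the variation of the Huber slope.\<close>

lemma smoothness_budget: "curv + \<gamma> * (\<theta> + 1)\<^sup>2 + \<theta> * cap / width \<le> L"
proof -
  have "0 \<le> (\<theta> - 1)\<^sup>2"
    by simp
  then have "(\<theta> + 1)\<^sup>2 \<le> 2 * (\<theta> * \<theta>) + 2"
    by (simp add: power2_eq_square algebra_simps)
  then have "\<gamma> * (\<theta> + 1)\<^sup>2 \<le> \<gamma> * (2 * (\<theta> * \<theta>) + 2)"
    using \<gamma>_pos by (simp add: mult_left_mono)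
  also have "\<dots> = (L + \<mu>) / 10"
    unfolding \<gamma>_def \<theta>_sq using \<mu>_pos by (simp add: field_simps)
  finally have "\<gamma> * (\<theta> + 1)\<^sup>2 \<le> (L + \<mu>) / 10" .
  moreover have "\<theta> * cap / width = \<theta> * \<theta> * \<mu> / 50"
    unfolding cap_def v_eq_def width_def using \<theta>_pos scale_pos by (simp add: field_simps)
  moreover have "\<mu> \<le> L / 4"
    using condition_number \<mu>_pos by (simp add: field_simps)
  ultimately show ?thesis
    unfolding curv_def \<theta>_sq using \<mu>_pos by simp
qed

lemma push_huber_deriv_lipschitz:
  "\<bar>push a * huber_deriv width (a $ 1) - push b * huber_deriv width (b $ 1)\<bar>
    \<le> \<gamma> * (\<theta> + 1) * norm (a - b) + cap * (norm (a - b) / width)"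
proof -
  define ha hb where "ha = huber_deriv width (a $ 1)" and "hb = huber_deriv width (b $ 1)"
  have "push a * ha - push b * hb = (push a - push b) * ha + push b * (ha - hb)"
    by (simp add: algebra_simps)
  then have "\<bar>push a * ha - push b * hb\<bar> \<le> \<bar>push a - push b\<bar> * \<bar>ha\<bar> + \<bar>push b\<bar> * \<bar>ha - hb\<bar>"
    by (simp add: abs_mult[symmetric] abs_triangle_ineq)
  also have "\<dots> \<le> \<gamma> * (\<theta> + 1) * norm (a - b) * 1 + cap * (norm (a - b) / width)"
    unfolding ha_def hb_def
    using push_lipschitz abs_huber_deriv_le[OF width_pos] push_nonneg push_le_cap width_pos cap_pos
      \<gamma>_pos \<theta>_pos
      huber_deriv_lipschitz[OF width_pos, of "a $ 1" "b $ 1"]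
      divide_right_mono[OF abs_vec_nth_diff_le_norm[of a 1 b], of width]
    by (intro add_mono mult_mono) auto
  finally show ?thesis
    unfolding ha_def hb_def by simp
qed

lemma grad_rest_lipschitz: "norm (grad_rest a - grad_rest b) \<le> (L - \<mu>) * norm (a - b)"
proof -
  define N where "N = norm (a - b)"
  define c where "c = (curv - \<mu>) * (a $ 1 - b $ 1)
    + \<theta> * (push a * huber_deriv width (a $ 1) - push b * huber_deriv width (b $ 1))"
  have "grad_rest a - grad_rest b = c *\<^sub>R axis 1 1 - (push a - push b) *\<^sub>R axis 2 1"
    unfolding grad_rest_def c_def by (simp add: algebra_simps)
  then have "norm (grad_rest a - grad_rest b) \<le> \<bar>c\<bar> + \<bar>push a - push b\<bar>"
    using norm_triangle_ineq4[of "c *\<^sub>R axis 1 (1::real)" "(push a - push b) *\<^sub>R axis 2 (1::real)"]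
    by simp
  also have "\<dots> \<le> (curv - \<mu>) * \<bar>a $ 1 - b $ 1\<bar>
      + \<theta> * \<bar>push a * huber_deriv width (a $ 1) - push b * huber_deriv width (b $ 1)\<bar>
      + \<bar>push a - push b\<bar>"
    unfolding c_def using \<mu>_le_curv \<theta>_pos abs_triangle_ineq[of "(curv - \<mu>) * (a $ 1 - b $ 1)"
        "\<theta> * (push a * huber_deriv width (a $ 1) - push b * huber_deriv width (b $ 1))"]
    by (simp add: abs_mult abs_of_nonneg[of "curv - \<mu>"])
  also have "\<dots> \<le> (curv - \<mu>) * N + \<theta> * (\<gamma> * (\<theta> + 1) * N + cap * (N / width)) + \<gamma> * (\<theta> + 1) * N"
    unfolding N_def using abs_vec_nth_diff_le_norm[of a 1 b] push_huber_deriv_lipschitz[of a b]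
      push_lipschitz[of a b] \<mu>_le_curv \<theta>_pos
    by (intro add_mono mult_left_mono) auto
  also have "\<dots> = (curv + \<gamma> * (\<theta> + 1)\<^sup>2 + \<theta> * cap / width - \<mu>) * N"
    by (simp add: power2_eq_square algebra_simps)
  also have "\<dots> \<le> (L - \<mu>) * N"
    using smoothness_budget by (intro mult_right_mono) (auto simp: N_def)
  finally show ?thesis
    unfolding N_def .
qed

lemma in_class_comp_fun: "in_class n L \<mu> 0 \<nu> comp_fun comp_grad"
  unfolding in_class_def
proof (intro conjI allI impI)
  show "(comp_fun i has_derivative (\<lambda>h. comp_grad i x \<bullet> h)) (at x)" for i x
    by (rule has_derivative_comp_fun)
  show "norm (comp_grad i x - comp_grad i y) \<le> L * norm (x - y)" for i x y
  proof -
    have "comp_grad i x - comp_grad i y = \<mu> *\<^sub>R (x - y) + (grad_rest x - grad_rest y)"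
      by (simp add: comp_grad_def algebra_simps)
    then have "norm (comp_grad i x - comp_grad i y) \<le> norm (\<mu> *\<^sub>R (x - y)) + norm (grad_rest x - grad_rest y)"
      by (simp only: norm_triangle_ineq)
    also have "\<dots> \<le> \<mu> * norm (x - y) + (L - \<mu>) * norm (x - y)"
      using \<mu>_pos grad_rest_lipschitz[of x y] by simp
    finally show ?thesis
      by (simp add: algebra_simps)
  qed
  show "convex_on UNIV (comp_fun i)" for i
    by (rule convex_on_comp_fun)
  show "strongly_convex \<mu> (fs_obj n comp_fun)"
    unfolding fs_obj_comp_fun[abs_def] using convex_on_rest by (rule strongly_convex_quadratic_plus_convex)
  show "norm (comp_grad i x - fs_grad n comp_grad x) \<le> 0 * norm (fs_grad n comp_grad x) + \<nu>" for i x
    using noise_bounds(2)[of i] by (simp add: fs_grad_comp_grad comp_grad_def)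
qed

subsection \<open>SGD on the hard instance\<close>

lemma step_coordinate_1:
  "(x - \<eta> *\<^sub>R comp_grad i x) $ 1
    = (1 - \<eta> * curv) * x $ 1 - \<eta> * (noise i + \<theta> * push x * huber_deriv width (x $ 1))"
  by (simp add: comp_grad_def grad_rest_def axis_def algebra_simps)

lemma step_coordinate_2: "(x - \<eta> *\<^sub>R comp_grad i x) $ 2 = (1 - \<eta> * \<mu>) * x $ 2 + \<eta> * push x"
  by (simp add: comp_grad_def grad_rest_def axis_def algebra_simps)

lemma x_init_coordinates: "x_init $ 1 = far" "x_init $ 2 = v_eq"
  by (simp_all add: x_init_def axis_def)

lemma push_saturated:
  assumes "width \<le> \<bar>x $ 1\<bar>" and "x $ 2 \<le> v_eq"
  shows "push x = cap"
proof -
  have "z_sat + v_eq \<le> \<theta> * width / 2"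
    unfolding z_sat_def cap_def \<gamma>_def width_def v_eq_def using \<theta>_pos scale_pos \<mu>_pos
    by (simp add: field_simps)
  moreover have "\<theta> * width / 2 \<le> \<theta> * huber width (x $ 1)"
    unfolding huber_eq_abs[OF width_pos assms(1)] using assms(1) \<theta>_pos by (simp add: algebra_simps)
  ultimately have "z_sat \<le> zfun x"
    unfolding zfun_def using assms(2) by linarith
  then show ?thesis
    unfolding push_def \<gamma>_z_sat[symmetric] using \<gamma>_pos z_sat_pos by (simp add: soft_ramp_deriv_saturated)
qed

lemma x2_lower_bound_small_step:
  assumes "0 < \<eta>" and "\<eta> \<le> 1 / (2 * \<mu> * n * K)"
    and \<sigma>: "\<forall>k\<in>{1..K}. \<sigma> k permutes {..<n}" and "1 \<le> k" and "k \<le> K + 1"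
  shows "v_eq / 2 \<le> sgd_start n comp_grad \<eta> \<sigma> x_init k $ 2"
proof -
  define \<rho> where "\<rho> = 1 - \<eta> * \<mu>"
  have budget: "real (n * K) * (\<eta> * \<mu>) \<le> 1 / 2"
    using assms(2) \<mu>_pos n_pos K_pos by (simp add: field_simps)
  have "1 * 1 \<le> real n * real K"
    using n_ge_2 K_ge_1 by (intro mult_mono) auto
  then have "1 * (\<eta> * \<mu>) \<le> real (n * K) * (\<eta> * \<mu>)"
    using assms(1) \<mu>_pos by (intro mult_right_mono) auto
  then have "\<eta> * \<mu> \<le> 1 / 2"
    using budget by linarith
  then have \<rho>: "0 \<le> \<rho>" "\<rho> \<le> 1"
    unfolding \<rho>_def using assms(1) \<mu>_pos by auto
  have "\<rho> * x $ 2 \<le> (x - \<eta> *\<^sub>R comp_grad i x) $ 2" for i x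
    unfolding step_coordinate_2 \<rho>_def using assms(1) push_nonneg by simp
  then have "\<rho> ^ (n * (k - 1)) * v_eq \<le> sgd_start n comp_grad \<eta> \<sigma> x_init k $ 2"
    using sgd_start_ge_power[where V = "\<lambda>x. x $ 2" and x = x_init, OF _ \<rho>(1) \<sigma> \<open>k \<le> K + 1\<close>]
    by (simp add: x_init_coordinates)
  moreover have "1 / 2 \<le> \<rho> ^ (n * (k - 1))"
  proof -
    have "1 + real (n * K) * (- (\<eta> * \<mu>)) \<le> (1 + - (\<eta> * \<mu>)) ^ (n * K)"
      by (rule Bernoulli_inequality) (use \<rho> in \<open>simp add: \<rho>_def\<close>)
    also have "\<dots> \<le> \<rho> ^ (n * (k - 1))"
      unfolding \<rho>_def[symmetric] diff_conv_add_uminus[symmetric]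
      using \<rho> \<open>k \<le> K + 1\<close> by (intro power_decreasing) auto
    finally show ?thesis
      using budget by simp
  qed
  then have "1 / 2 * v_eq \<le> \<rho> ^ (n * (k - 1)) * v_eq"
    using v_eq_pos by (simp add: mult_right_mono)
  ultimately show ?thesis
    by simp
qed

lemma medium_step_bounds:
  assumes "1 / (2 * \<mu> * n * K) < \<eta>" and "\<eta> * curv < 5 / 2"
  shows "0 < \<eta>" and "\<eta> * \<mu> \<le> 5 / 6" and "\<theta> * cap \<le> \<nu> / 150"
proof -
  show "0 < \<eta>"
    by (rule less_trans[OF _ assms(1)]) (use \<mu>_pos n_pos K_pos in simp)
  have "\<eta> * curv = 3 / 4 * (\<eta> * L)"
    unfolding curv_def by simp
  then have "\<eta> * L \<le> 10 / 3"
    using assms(2) by linarith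
  have "4 * \<mu> \<le> L"
    using condition_number \<mu>_pos by (simp add: field_simps)
  then have "\<eta> * (4 * \<mu>) \<le> \<eta> * L"
    using \<open>0 < \<eta>\<close> by (intro mult_left_mono) auto
  then show "\<eta> * \<mu> \<le> 5 / 6"
    using \<open>\<eta> * L \<le> 10 / 3\<close> by simp
  have "1 < 2 * \<mu> * n * K * \<eta>"
    using assms(1) \<mu>_pos n_pos K_pos by (simp add: field_simps)
  then have "L \<le> 2 * \<mu> * n * K * (\<eta> * L)"
    using L_pos by (simp add: algebra_simps)
  also have "\<dots> \<le> 2 * \<mu> * n * K * (10 / 3)"
    using \<open>\<eta> * L \<le> 10 / 3\<close> \<mu>_pos n_pos K_pos by (intro mult_left_mono) auto
  finally have "L / \<mu> \<le> 20 * n * K / 3"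
    using \<mu>_pos by (simp add: field_simps)
  then have "L / \<mu> * (\<nu> / (1000 * n * K)) \<le> 20 * n * K / 3 * (\<nu> / (1000 * n * K))"
    using \<nu>_pos n_pos K_pos by (intro mult_right_mono) auto
  moreover have "\<theta> * cap = L / \<mu> * (\<nu> / (1000 * n * K))"
    unfolding cap_def v_eq_def scale_def using \<theta>_sq \<mu>_pos n_pos K_pos by (simp add: field_simps)
  moreover have "20 * n * K / 3 * (\<nu> / (1000 * n * K)) = \<nu> / 150"
    using n_pos K_pos by (simp add: field_simps)
  ultimately show "\<theta> * cap \<le> \<nu> / 150"
    by linarith
qed

lemma noise_kick:
  assumes "1 / (2 * \<mu> * n * K) < \<eta>" and "\<eta> * curv < 5 / 2" and "\<bar>x $ 1\<bar> < width"
  shows "width \<le> \<bar>(x - \<eta> *\<^sub>R comp_grad i x) $ 1\<bar>"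
proof -
  note \<eta> = medium_step_bounds[OF assms(1,2)]
  have "\<bar>(1 - \<eta> * curv) * x $ 1\<bar> \<le> 3 / 2 * width"
  proof -
    have "\<bar>1 - \<eta> * curv\<bar> \<le> 3 / 2"
      using assms(2) mult_pos_pos[OF \<eta>(1) curv_pos] by (simp add: abs_if)
    then have "\<bar>1 - \<eta> * curv\<bar> * \<bar>x $ 1\<bar> \<le> 3 / 2 * width"
      using assms(3) by (intro mult_mono) auto
    then show ?thesis
      by (simp add: abs_mult)
  qed
  moreover have "\<eta> * (\<nu> / 3) \<le> \<bar>\<eta> * noise i\<bar>"
    using noise_bounds(1)[of i] \<eta>(1) by (simp add: abs_mult)
  moreover have "\<bar>\<eta> * (\<theta> * push x * huber_deriv width (x $ 1))\<bar> \<le> \<eta> * (\<nu> / 150)"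
  proof -
    have "push x * \<bar>huber_deriv width (x $ 1)\<bar> \<le> cap * 1"
      using push_nonneg push_le_cap abs_huber_deriv_le[OF width_pos] cap_pos by (intro mult_mono) auto
    then have "\<bar>\<theta> * push x * huber_deriv width (x $ 1)\<bar> \<le> \<theta> * cap"
      using \<theta>_pos push_nonneg by (simp add: abs_mult mult.assoc)
    then show ?thesis
      using \<eta>(1,3) by (simp add: abs_mult)
  qed
  moreover have "5 / 2 * width \<le> 49 / 150 * (\<eta> * \<nu>)"
  proof -
    have "\<nu> * (1 / (2 * \<mu> * n * K)) \<le> \<nu> * \<eta>"
      using assms(1) \<nu>_pos by (intro mult_left_mono) auto
    moreover have "10 * width = \<nu> * (1 / (2 * \<mu> * n * K))"
      unfolding width_def scale_def using \<theta>_pos \<mu>_pos n_pos K_pos by (simp add: field_simps)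
    ultimately show ?thesis
      using width_pos mult.commute[of \<nu> \<eta>] by linarith
  qed
  moreover have "(x - \<eta> *\<^sub>R comp_grad i x) $ 1
      = (1 - \<eta> * curv) * x $ 1 - \<eta> * noise i - \<eta> * (\<theta> * push x * huber_deriv width (x $ 1))"
    unfolding step_coordinate_1 by (simp add: algebra_simps)
  ultimately show ?thesis
    by linarith
qed

text \<open>For medium steps \<open>x\<^sub>2\<close> drops below \<open>v / 2\<close> only in the step after a visit of the strip
  \<open>\<bar>x\<^sub>1\<bar> < w\<close>, and then at most by the factor \<open>1 - \<eta>\<mu>\<close>.\<close>

definition medium_step_invariant :: "real \<Rightarrow> real^4 \<Rightarrow> bool" where
  "medium_step_invariant \<eta> x \<longleftrightarrow> (1 - \<eta> * \<mu>) * (v_eq / 2) \<le> x $ 2 \<and> x $ 2 \<le> v_eq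
    \<and> (\<bar>x $ 1\<bar> < width \<longrightarrow> v_eq / 2 \<le> x $ 2)"

lemma medium_step_invariant_step:
  assumes "1 / (2 * \<mu> * n * K) < \<eta>" and "\<eta> * curv < 5 / 2" and inv: "medium_step_invariant \<eta> x"
  shows "medium_step_invariant \<eta> (x - \<eta> *\<^sub>R comp_grad i x)"
proof -
  define r where "r = \<eta> * \<mu>"
  have r: "0 \<le> r" "r \<le> 5 / 6"
    unfolding r_def using medium_step_bounds[OF assms(1,2)] \<mu>_pos by simp_all
  have x2: "(1 - r) * (v_eq / 2) \<le> x $ 2" "x $ 2 \<le> v_eq" "\<bar>x $ 1\<bar> < width \<Longrightarrow> v_eq / 2 \<le> x $ 2"
    using inv unfolding medium_step_invariant_def r_def by auto
  have next2: "(x - \<eta> *\<^sub>R comp_grad i x) $ 2 = (1 - r) * x $ 2 + \<eta> * push x"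
    unfolding step_coordinate_2 r_def ..
  have "\<eta> * cap = r * v_eq"
    unfolding r_def cap_def by simp
  moreover have "\<eta> * push x \<le> \<eta> * cap"
    using medium_step_bounds(1)[OF assms(1,2)] push_le_cap by (simp add: mult_left_mono)
  ultimately have push_step: "0 \<le> \<eta> * push x" "\<eta> * push x \<le> r * v_eq"
    using medium_step_bounds(1)[OF assms(1,2)] push_nonneg by simp_all
  have "(1 - r) * x $ 2 \<le> (1 - r) * v_eq"
    using x2(2) r by (intro mult_left_mono) auto
  then have upper: "(x - \<eta> *\<^sub>R comp_grad i x) $ 2 \<le> v_eq"
    unfolding next2 using push_step by (simp add: algebra_simps)
  show ?thesis
  proof (cases "\<bar>x $ 1\<bar> < width")
    case True
    then have "(1 - r) * (v_eq / 2) \<le> (1 - r) * x $ 2"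
      using x2(3) r by (intro mult_left_mono) auto
    then show ?thesis
      unfolding medium_step_invariant_def r_def[symmetric]
      using upper next2 push_step noise_kick[OF assms(1,2) True, of i] by auto
  next
    case False
    then have "push x = cap"
      using x2(2) by (intro push_saturated) auto
    then have "(x - \<eta> *\<^sub>R comp_grad i x) $ 2 = (1 - r) * x $ 2 + r * v_eq"
      unfolding next2 r_def cap_def by simp
    moreover have "(1 - r) * ((1 - r) * (v_eq / 2)) \<le> (1 - r) * x $ 2"
      using x2(1) r by (intro mult_left_mono) auto
    moreover have "(1 - r) * ((1 - r) * (v_eq / 2)) + r * v_eq = v_eq / 2 + r * r * (v_eq / 2)"
      by (simp add: field_simps)
    moreover have "0 \<le> r * r * (v_eq / 2)" and "(1 - r) * (v_eq / 2) \<le> v_eq / 2"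
      using r v_eq_pos by auto
    ultimately show ?thesis
      unfolding medium_step_invariant_def r_def[symmetric] using upper by auto
  qed
qed

lemma x2_lower_bound_medium_step:
  assumes "1 / (2 * \<mu> * n * K) < \<eta>" and "\<eta> * curv < 5 / 2"
    and \<sigma>: "\<forall>k\<in>{1..K}. \<sigma> k permutes {..<n}" and "k \<le> K + 1"
  shows "v_eq / 12 \<le> sgd_start n comp_grad \<eta> \<sigma> x_init k $ 2"
proof -
  note \<eta> = medium_step_bounds[OF assms(1,2)]
  have init: "medium_step_invariant \<eta> x_init"
    unfolding medium_step_invariant_def x_init_coordinates
    using mult_pos_pos[OF \<eta>(1) \<mu>_pos] v_eq_pos width_le_far by auto
  have "medium_step_invariant \<eta> (sgd_start n comp_grad \<eta> \<sigma> x_init k)"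
    by (rule sgd_start_invariant[where P = "medium_step_invariant \<eta>", OF _ \<sigma> init \<open>k \<le> K + 1\<close>])
      (rule medium_step_invariant_step[OF assms(1,2)])
  then have "(1 - \<eta> * \<mu>) * (v_eq / 2) \<le> sgd_start n comp_grad \<eta> \<sigma> x_init k $ 2"
    unfolding medium_step_invariant_def by blast
  moreover have "\<eta> * \<mu> * v_eq \<le> 5 / 6 * v_eq"
    using \<eta>(2) v_eq_pos by (intro mult_right_mono) auto
  ultimately show ?thesis
    by (simp add: algebra_simps)
qed

text \<open>For large steps \<open>\<bar>x\<^sub>1\<bar>\<close> is expanded by the factor \<open>\<eta>\<lambda> - 1 \<ge> 3/2\<close>, which beats the
  bounded drift once \<open>\<bar>x\<^sub>1\<bar> \<ge> far\<close>; then \<open>push\<close> is saturated and \<open>x\<^sub>2 = v\<close> stays fixed.\<close>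

definition large_step_invariant :: "real^4 \<Rightarrow> bool" where
  "large_step_invariant x \<longleftrightarrow> far \<le> \<bar>x $ 1\<bar> \<and> x $ 2 = v_eq"

lemma large_step_invariant_step:
  assumes "5 / 2 \<le> \<eta> * curv" and inv: "large_step_invariant x"
  shows "large_step_invariant (x - \<eta> *\<^sub>R comp_grad i x)"
proof -
  have "0 < \<eta> * curv"
    using assms(1) by linarith
  then have "0 < \<eta>"
    using curv_pos by (simp add: zero_less_mult_iff)
  have x: "far \<le> \<bar>x $ 1\<bar>" "x $ 2 = v_eq"
    using inv unfolding large_step_invariant_def by auto
  have push: "push x = cap"
    using x width_le_far by (intro push_saturated) auto
  have "(\<eta> * curv - 1) * far \<le> \<bar>(1 - \<eta> * curv) * x $ 1\<bar>"
    using x(1) assms(1) by (simp add: abs_mult mult_left_mono)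
  moreover have "\<bar>\<eta> * (noise i + \<theta> * cap * huber_deriv width (x $ 1))\<bar> \<le> \<eta> * (\<nu> + \<theta> * cap)"
  proof -
    have "\<bar>\<theta> * cap * huber_deriv width (x $ 1)\<bar> \<le> \<theta> * cap"
      using \<theta>_pos cap_pos abs_huber_deriv_le[OF width_pos, of "x $ 1"] by (simp add: abs_mult)
    then have "\<bar>noise i + \<theta> * cap * huber_deriv width (x $ 1)\<bar> \<le> \<nu> + \<theta> * cap"
      using noise_bounds(2)[of i] by linarith
    then show ?thesis
      using \<open>0 < \<eta>\<close> by (simp add: abs_mult)
  qed
  moreover have "far + \<eta> * (\<nu> + \<theta> * cap) \<le> (\<eta> * curv - 1) * far"
  proof -
    have "5 * (\<nu> + \<theta> * cap) \<le> curv * far"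
      unfolding far_def using curv_pos width_pos by (simp add: field_simps)
    then have "\<eta> * (5 * (\<nu> + \<theta> * cap)) \<le> \<eta> * (curv * far)"
      using \<open>0 < \<eta>\<close> by (intro mult_left_mono) auto
    moreover have "\<eta> * curv * far \<le> 5 * (\<eta> * curv - 2) * far"
      using assms(1) width_pos width_le_far by (intro mult_right_mono) auto
    ultimately show ?thesis
      by (simp add: algebra_simps)
  qed
  ultimately have "far \<le> \<bar>(x - \<eta> *\<^sub>R comp_grad i x) $ 1\<bar>"
    unfolding step_coordinate_1 push by linarith
  moreover have "(x - \<eta> *\<^sub>R comp_grad i x) $ 2 = v_eq"
    using x(2) unfolding step_coordinate_2 push cap_def by (simp add: algebra_simps)
  ultimately show ?thesis
    unfolding large_step_invariant_def by simp
qed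

lemma x2_lower_bound_large_step:
  assumes "5 / 2 \<le> \<eta> * curv"
    and \<sigma>: "\<forall>k\<in>{1..K}. \<sigma> k permutes {..<n}" and "k \<le> K + 1"
  shows "v_eq \<le> sgd_start n comp_grad \<eta> \<sigma> x_init k $ 2"
proof -
  have init: "large_step_invariant x_init"
    unfolding large_step_invariant_def x_init_coordinates using width_pos width_le_far by simp
  have "large_step_invariant (sgd_start n comp_grad \<eta> \<sigma> x_init k)"
    by (rule sgd_start_invariant[where P = large_step_invariant, OF _ \<sigma> init \<open>k \<le> K + 1\<close>])
      (rule large_step_invariant_step[OF assms(1)])
  then show ?thesis
    unfolding large_step_invariant_def by simp
qed

lemma x2_lower_bound:
  assumes "0 < \<eta>" and \<sigma>: "\<forall>k\<in>{1..K}. \<sigma> k permutes {..<n}" and "k \<in> {1..K + 1}"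
  shows "v_eq / 12 \<le> sgd_start n comp_grad \<eta> \<sigma> x_init k $ 2"
proof -
  consider "\<eta> \<le> 1 / (2 * \<mu> * n * K)" | "1 / (2 * \<mu> * n * K) < \<eta>" "\<eta> * curv < 5 / 2"
    | "5 / 2 \<le> \<eta> * curv"
    by linarith
  then show ?thesis
  proof cases
    case 1
    then show ?thesis
      using x2_lower_bound_small_step[OF assms(1) 1 \<sigma>] assms(3) v_eq_pos by fastforce
  next
    case 2
    then show ?thesis
      using x2_lower_bound_medium_step[OF 2 \<sigma>] assms(3) by simp
  next
    case 3
    then show ?thesis
      using x2_lower_bound_large_step[OF 3 \<sigma>] assms(3) v_eq_pos by fastforce
  qed
qed

lemma suboptimality_lower_bound:
  assumes \<sigma>: "\<forall>k\<in>{1..K}. \<sigma> k permutes {..<n}" and "0 < \<eta>"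
    and "\<forall>k\<in>{1..K+1}. 0 \<le> \<alpha> k" and "\<exists>k\<in>{1..K+1}. \<alpha> k \<noteq> 0"
  shows "1 / 288000000 * (L * \<nu>\<^sup>2 / (\<mu>\<^sup>2 * real n ^ 2 * real K ^ 2))
    \<le> fs_obj n comp_fun ((1 / (\<Sum>k=1..K+1. \<alpha> k)) *\<^sub>R (\<Sum>k=1..K+1. \<alpha> k *\<^sub>R sgd_start n comp_grad \<eta> \<sigma> x_init k))
      - (INF x. fs_obj n comp_fun x)"
proof -
  define x where "x = (1 / (\<Sum>k=1..K+1. \<alpha> k)) *\<^sub>R (\<Sum>k=1..K+1. \<alpha> k *\<^sub>R sgd_start n comp_grad \<eta> \<sigma> x_init k)"
  have "v_eq / 12 \<le> x $ 2"
    unfolding x_def using assms x2_lower_bound[OF \<open>0 < \<eta>\<close> \<sigma>]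
    by (intro weighted_average_component_ge) auto
  then have "(v_eq / 12)\<^sup>2 \<le> (x $ 2)\<^sup>2"
    using v_eq_pos by (intro power_mono) auto
  also have "\<dots> \<le> (norm x)\<^sup>2"
    using component_le_norm_cart[of x 2] \<open>v_eq / 12 \<le> x $ 2\<close> v_eq_pos by (intro power_mono) auto
  also have "\<dots> = x \<bullet> x"
    by (rule power2_norm_eq_inner)
  finally have "\<mu> / 2 * (v_eq / 12)\<^sup>2 \<le> \<mu> / 2 * (x \<bullet> x)"
    using \<mu>_pos by (simp add: mult_left_mono)
  then have "\<mu> / 2 * (v_eq / 12)\<^sup>2 \<le> fs_obj n comp_fun x"
    unfolding fs_obj_comp_fun using rest_nonneg[of x] by linarith
  moreover have "\<mu> / 2 * (v_eq / 12)\<^sup>2 = 1 / 288000000 * (L * \<nu>\<^sup>2 / (\<mu>\<^sup>2 * real n ^ 2 * real K ^ 2))"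
  proof -
    have "\<mu> / 2 * (v_eq / 12)\<^sup>2 = \<theta> * \<theta> * \<mu> * \<nu>\<^sup>2 / (288000000 * \<mu>\<^sup>2 * real n ^ 2 * real K ^ 2)"
      unfolding v_eq_def scale_def using \<mu>_pos n_pos K_pos by (simp add: field_simps power2_eq_square)
    then show ?thesis
      unfolding \<theta>_sq using \<mu>_pos by (simp add: field_simps power2_eq_square)
  qed
  ultimately show ?thesis
    unfolding INF_fs_obj_comp_fun x_def[symmetric] by linarith
qed

lemma hard_instance_lower_bound:
  "\<exists>(f :: nat \<Rightarrow> real^4 \<Rightarrow> real) (g :: nat \<Rightarrow> real^4 \<Rightarrow> real^4) (x0 :: real^4).
     in_class n L \<mu> 0 \<nu> f g \<and>
     (\<forall>(\<sigma> :: nat \<Rightarrow> nat \<Rightarrow> nat) (\<eta>::real) (\<alpha> :: nat \<Rightarrow> real).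
        (\<forall>k\<in>{1..K}. \<sigma> k permutes {..<n}) \<longrightarrow> \<eta> > 0 \<longrightarrow>
        (\<forall>k\<in>{1..K+1}. \<alpha> k \<ge> 0) \<longrightarrow> (\<exists>k\<in>{1..K+1}. \<alpha> k \<noteq> 0) \<longrightarrow>
        (let xhat = (1 / (\<Sum>k=1..K+1. \<alpha> k)) *\<^sub>R (\<Sum>k=1..K+1. \<alpha> k *\<^sub>R sgd_start n g \<eta> \<sigma> x0 k)
         in fs_obj n f xhat - (INF x. fs_obj n f x)
              \<ge> 1 / 288000000 * (L * \<nu>\<^sup>2 / (\<mu>\<^sup>2 * real n ^ 2 * real K ^ 2))))"
  using in_class_comp_fun suboptimality_lower_bound unfolding Let_def by blast

end

theorem theorem7:
  "\<exists>c>0. \<forall>(n::nat) (K::nat) (L::real) (\<mu>::real) (\<nu>::real).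
     n \<ge> 2 \<longrightarrow> K \<ge> 1 \<longrightarrow> L > 0 \<longrightarrow> \<mu> > 0 \<longrightarrow> \<nu> > 0 \<longrightarrow> L / \<mu> \<ge> 4 \<longrightarrow>
     (\<exists>(f :: nat \<Rightarrow> real^4 \<Rightarrow> real) (g :: nat \<Rightarrow> real^4 \<Rightarrow> real^4) (x0 :: real^4).
        in_class n L \<mu> 0 \<nu> f g \<and>
        (\<forall>(\<sigma> :: nat \<Rightarrow> nat \<Rightarrow> nat) (\<eta>::real) (\<alpha> :: nat \<Rightarrow> real).
           (\<forall>k\<in>{1..K}. \<sigma> k permutes {..<n}) \<longrightarrow> \<eta> > 0 \<longrightarrow>
           (\<forall>k\<in>{1..K+1}. \<alpha> k \<ge> 0) \<longrightarrow> (\<exists>k\<in>{1..K+1}. \<alpha> k \<noteq> 0) \<longrightarrow>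
           (let xhat = (1 / (\<Sum>k=1..K+1. \<alpha> k)) *\<^sub>R
                         (\<Sum>k=1..K+1. \<alpha> k *\<^sub>R sgd_start n g \<eta> \<sigma> x0 k)
            in fs_obj n f xhat - (INF x. fs_obj n f x)
                 \<ge> c * (L * \<nu>\<^sup>2 / (\<mu>\<^sup>2 * real n ^ 2 * real K ^ 2)))))"
  by (intro exI[of _ "1 / 288000000"] conjI allI impI hard_instance.hard_instance_lower_bound)
    (simp_all add: hard_instance_def)

end
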